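(* Let $\mathbf t:\mathcal D\to\mathcal T$ be a refinement system and $c:A\to B$ in $\mathcal T$. For presheaves $\psi$ on $B^{-}$, $\rho$ on $B^{+}$, and $\sigma$ on $A^{-}$: (a) $(c^{+})^*({}^{\perp_B}\psi)\cong{}^{\perp_A}\big((c^{-})_!\psi\big)$ as presheaves on $A^{+}$; (b) there is a natural transformation $(c^{-})_!(\rho^{\perp_B})\Rightarrow\big((c^{+})^*\rho\big)^{\perp_A}$ of presheaves on $A^{-}$; (c) there is a natural transformation $(c^{+})_!({}^{\perp_A}\sigma)\Rightarrow{}^{\perp_B}\big((c^{-})^*\sigma\big)$ of presheaves on $B^{+}$.
   Context: A refinement system is a functor $\mathbf{t}:\mathcal{D}\to\mathcal{T}$; composition is diagrammatic. Write $P\sqsubset A$ if $\mathbf t(P)=A$; a derivation of $P\Rightarrow_cQ$ is a morphism $\alpha:P\to Q$ with $\mathbf t(\alpha)=c$. For $B\in\mathcal T$: $B^{+}$ has objects $(P,c)$, $P\sqsubset X$, $c:X\to B$, morphisms $(P_1,c_1)\to(P_2,c_2)$ the derivations of $P_1\Rightarrow_eP_2$ with $c_1=e;c_2$; $B^{-}$ is the opposite of the category with objects $(d,R)$, $d:B\to Y$, $R\sqsubset Y$, morphisms $(d_1,R_1)\to(d_2,R_2)$ the derivations of $R_1\Rightarrow_eR_2$ with $d_1;e=d_2$. For $c:A\to B$: $c^{+}:A^{+}\to B^{+}$, $(P,e)\mapsto(P,e;c)$, and $c^{-}:B^{-}\to A^{-}$, $(d,R)\mapsto(c;d,R)$, identity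 on derivations. $\mathrm{Jdg}(\mathbf t)$ has objects $(P,c,R)$ and morphisms $(P_1,c_1,R_1)\to(P_2,c_2,R_2)$ pairs of derivations $\beta$ of $P_1\Rightarrow_eP_2$, $\gamma$ of $R_2\Rightarrow_{e'}R_1$ with $c_1=e;c_2;e'$; $\mathrm{Der}:\mathrm{Jdg}(\mathbf t)^{op}\to\mathbf{Set}$ sends $(P,c,R)$ to the set of derivations of $P\Rightarrow_cR$ and $(\beta,\gamma)$ to $\alpha\mapsto\beta;\alpha;\gamma$. Bracket $\langle-\mid-\rangle_B:B^{+}\times B^{-}\to\mathrm{Jdg}(\mathbf t)$: $((P,c),(d,R))\mapsto(P,c;d,R)$, $(\beta,\gamma)\mapsto(\beta,\gamma)$. Duals with respect to $B$: for $\phi$ on $B^{+}$, $\phi^{\perp_B}(y)=$ the set of natural transformations $\phi\Rightarrow\mathrm{Der}(\langle-\mid y\rangle_B)$ (a presheaf on $B^{-}$); for $\psi$ on $B^{-}$, ${}^{\perp_B}\psi(x)=$ the set of natural transformations $\psi\Rightarrow\mathrm{Der}(\langle x\mid-\rangle_B)$ (a presheaf on $B^{+}$); similarly for $A$. For a functor $F:\mathcal X\to\mathcal Y$: $F^*\psi=\psi\circ F^{op}$ and $F_!\chi(y)=\int^{x}\mathcal Y(y,Fx)\times\chi(x)$. *)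

theory Defs
  imports Main
begin

section \<open>Small-ish categories as explicit data (composition is diagrammatic)\<close>

record ('o,'m) cat =
  cOb  :: "'o set"
  cHom :: "'o \<Rightarrow> 'o \<Rightarrow> 'm set"
  cCmp :: "'m \<Rightarrow> 'm \<Rightarrow> 'm"
  cId  :: "'o \<Rightarrow> 'm"

definition category :: "('o,'m) cat \<Rightarrow> bool" where
  "category C \<longleftrightarrow>
     (\<forall>x y. cHom C x y \<noteq> {} \<longrightarrow> x \<in> cOb C \<and> y \<in> cOb C) \<and>
     (\<forall>x\<in>cOb C. cId C x \<in> cHom C x x) \<and>
     (\<forall>x y z f g. f \<in> cHom C x y \<longrightarrow> g \<in> cHom C y z \<longrightarrow> cCmp C f g \<in> cHom C x z) \<and>
     (\<forall>x y f. f \<in> cHom C x y \<longrightarrow> cCmp C (cId C x) f = f \<and> cCmp C f (cId C y) = f) \<and>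
     (\<forall>w x y z f g h. f \<in> cHom C w x \<longrightarrow> g \<in> cHom C x y \<longrightarrow> h \<in> cHom C y z \<longrightarrow>
        cCmp C (cCmp C f g) h = cCmp C f (cCmp C g h))"

definition is_functor :: "('o,'m) cat \<Rightarrow> ('o2,'m2) cat \<Rightarrow> ('o \<Rightarrow> 'o2) \<Rightarrow> ('m \<Rightarrow> 'm2) \<Rightarrow> bool" where
  "is_functor C C' Fo Fm \<longleftrightarrow>
     (\<forall>x\<in>cOb C. Fo x \<in> cOb C') \<and>
     (\<forall>x y f. f \<in> cHom C x y \<longrightarrow> Fm f \<in> cHom C' (Fo x) (Fo y)) \<and>
     (\<forall>x\<in>cOb C. Fm (cId C x) = cId C' (Fo x)) \<and>
     (\<forall>x y z f g. f \<in> cHom C x y \<longrightarrow> g \<in> cHom C y z \<longrightarrow>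
        Fm (cCmp C f g) = cCmp C' (Fm f) (Fm g))"

definition opcat :: "('o,'m) cat \<Rightarrow> ('o,'m) cat" where
  "opcat C = \<lparr>cOb = cOb C, cHom = (\<lambda>x y. cHom C y x), cCmp = (\<lambda>f g. cCmp C g f), cId = cId C\<rparr>"

definition refinement_system ::
  "('p,'d) cat \<Rightarrow> ('a,'c) cat \<Rightarrow> ('p \<Rightarrow> 'a) \<Rightarrow> ('d \<Rightarrow> 'c) \<Rightarrow> bool" where
  "refinement_system D T to tm \<longleftrightarrow> category D \<and> category T \<and> is_functor D T to tm"

definition Bplus_ob :: "('p,'d) cat \<Rightarrow> ('a,'c) cat \<Rightarrow> ('p \<Rightarrow> 'a) \<Rightarrow> 'a \<Rightarrow> ('p \<times> 'c) set" where
  "Bplus_ob D T to B = {(P,c). P \<in> cOb D \<and> c \<in> cHom T (to P) B}"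

definition Bplus :: "('p,'d) cat \<Rightarrow> ('a,'c) cat \<Rightarrow> ('p \<Rightarrow> 'a) \<Rightarrow> ('d \<Rightarrow> 'c) \<Rightarrow> 'a \<Rightarrow> ('p \<times> 'c, 'd) cat" where
  "Bplus D T to tm B =
    \<lparr>cOb = Bplus_ob D T to B,
     cHom = (\<lambda>(P1,c1) (P2,c2). {\<alpha> \<in> cHom D P1 P2.
               (P1,c1) \<in> Bplus_ob D T to B \<and> (P2,c2) \<in> Bplus_ob D T to B \<and> c1 = cCmp T (tm \<alpha>) c2}),
     cCmp = cCmp D,
     cId = (\<lambda>(P,c). cId D P)\<rparr>"

definition Bminus_ob :: "('p,'d) cat \<Rightarrow> ('a,'c) cat \<Rightarrow> ('p \<Rightarrow> 'a) \<Rightarrow> 'a \<Rightarrow> ('c \<times> 'p) set" where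
  "Bminus_ob D T to B = {(d,R). R \<in> cOb D \<and> d \<in> cHom T B (to R)}"

definition Bminus0 :: "('p,'d) cat \<Rightarrow> ('a,'c) cat \<Rightarrow> ('p \<Rightarrow> 'a) \<Rightarrow> ('d \<Rightarrow> 'c) \<Rightarrow> 'a \<Rightarrow> ('c \<times> 'p, 'd) cat" where
  "Bminus0 D T to tm B =
    \<lparr>cOb = Bminus_ob D T to B,
     cHom = (\<lambda>(d1,R1) (d2,R2). {\<alpha> \<in> cHom D R1 R2.
               (d1,R1) \<in> Bminus_ob D T to B \<and> (d2,R2) \<in> Bminus_ob D T to B \<and> cCmp T d1 (tm \<alpha>) = d2}),
     cCmp = cCmp D,
     cId = (\<lambda>(d,R). cId D R)\<rparr>"

definition Bminus :: "('p,'d) cat \<Rightarrow> ('a,'c) cat \<Rightarrow> ('p \<Rightarrow> 'a) \<Rightarrow> ('d \<Rightarrow> 'c) \<Rightarrow> 'a \<Rightarrow> ('c \<times> 'p, 'd) cat" where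
  "Bminus D T to tm B = opcat (Bminus0 D T to tm B)"

text \<open>c+ and c- (identity on derivations).\<close>
definition cplus :: "('a,'c) cat \<Rightarrow> 'c \<Rightarrow> ('p \<times> 'c) \<Rightarrow> ('p \<times> 'c)" where
  "cplus T c = (\<lambda>(P,e). (P, cCmp T e c))"

definition cminus :: "('a,'c) cat \<Rightarrow> 'c \<Rightarrow> ('c \<times> 'p) \<Rightarrow> ('c \<times> 'p)" where
  "cminus T c = (\<lambda>(d,R). (cCmp T c d, R))"

definition Jdg_ob :: "('p,'d) cat \<Rightarrow> ('a,'c) cat \<Rightarrow> ('p \<Rightarrow> 'a) \<Rightarrow> ('p \<times> 'c \<times> 'p) set" where
  "Jdg_ob D T to = {(P,c,R). P \<in> cOb D \<and> R \<in> cOb D \<and> c \<in> cHom T (to P) (to R)}"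

definition Jdg :: "('p,'d) cat \<Rightarrow> ('a,'c) cat \<Rightarrow> ('p \<Rightarrow> 'a) \<Rightarrow> ('d \<Rightarrow> 'c) \<Rightarrow> ('p \<times> 'c \<times> 'p, 'd \<times> 'd) cat" where
  "Jdg D T to tm =
    \<lparr>cOb = Jdg_ob D T to,
     cHom = (\<lambda>(P1,c1,R1) (P2,c2,R2). {(\<beta>,\<gamma>). \<beta> \<in> cHom D P1 P2 \<and> \<gamma> \<in> cHom D R2 R1 \<and>
               (P1,c1,R1) \<in> Jdg_ob D T to \<and> (P2,c2,R2) \<in> Jdg_ob D T to \<and>
               c1 = cCmp T (cCmp T (tm \<beta>) c2) (tm \<gamma>)}),
     cCmp = (\<lambda>(\<beta>,\<gamma>) (\<beta>',\<gamma>'). (cCmp D \<beta> \<beta>', cCmp D \<gamma>' \<gamma>)),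
     cId = (\<lambda>(P,c,R). (cId D P, cId D R))\<rparr>"

text \<open>Presheaves (Set-valued contravariant functors), given by object part and action:
  for f in Hom x y, snd F x y f maps fst F y to fst F x.\<close>
type_synonym ('o,'m,'v) psh = "('o \<Rightarrow> 'v set) \<times> ('o \<Rightarrow> 'o \<Rightarrow> 'm \<Rightarrow> 'v \<Rightarrow> 'v)"

definition presheaf :: "('o,'m) cat \<Rightarrow> ('o,'m,'v) psh \<Rightarrow> bool" where
  "presheaf C F \<longleftrightarrow>
     (\<forall>x y f a. f \<in> cHom C x y \<longrightarrow> a \<in> fst F y \<longrightarrow> snd F x y f a \<in> fst F x) \<and>
     (\<forall>x\<in>cOb C. \<forall>a\<in>fst F x. snd F x x (cId C x) a = a) \<and>
     (\<forall>x y z f g a. f \<in> cHom C x y \<longrightarrow> g \<in> cHom C y z \<longrightarrow> a \<in> fst F z \<longrightarrow>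
        snd F x z (cCmp C f g) a = snd F x y f (snd F y z g a))"

definition derivs :: "('p,'d) cat \<Rightarrow> ('d \<Rightarrow> 'c) \<Rightarrow> 'p \<Rightarrow> 'p \<Rightarrow> 'c \<Rightarrow> 'd set" where
  "derivs D tm P Q c = {\<alpha> \<in> cHom D P Q. tm \<alpha> = c}"

definition Der :: "('p,'d) cat \<Rightarrow> ('d \<Rightarrow> 'c) \<Rightarrow> ('p \<times> 'c \<times> 'p, 'd \<times> 'd, 'd) psh" where
  "Der D tm = ((\<lambda>(P,c,R). derivs D tm P R c),
               (\<lambda>x y (\<beta>,\<gamma>) \<alpha>. cCmp D (cCmp D \<beta> \<alpha>) \<gamma>))"

definition nat_trans :: "('o,'m) cat \<Rightarrow> ('o,'m,'v) psh \<Rightarrow> ('o,'m,'w) psh \<Rightarrow> ('o \<Rightarrow> 'v \<Rightarrow> 'w) \<Rightarrow> bool" where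
  "nat_trans C F G \<eta> \<longleftrightarrow>
     (\<forall>x. x \<notin> cOb C \<longrightarrow> \<eta> x = undefined) \<and>
     (\<forall>x\<in>cOb C. \<forall>a. (a \<in> fst F x \<longrightarrow> \<eta> x a \<in> fst G x) \<and> (a \<notin> fst F x \<longrightarrow> \<eta> x a = undefined)) \<and>
     (\<forall>x y f a. f \<in> cHom C x y \<longrightarrow> a \<in> fst F y \<longrightarrow> \<eta> x (snd F x y f a) = snd G x y f (\<eta> y a))"

definition psh_iso :: "('o,'m) cat \<Rightarrow> ('o,'m,'v) psh \<Rightarrow> ('o,'m,'w) psh \<Rightarrow> bool" where
  "psh_iso C F G \<longleftrightarrow> (\<exists>\<eta>. nat_trans C F G \<eta> \<and> (\<forall>x\<in>cOb C. bij_betw (\<eta> x) (fst F x) (fst G x)))"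

definition pull :: "('o \<Rightarrow> 'o2) \<Rightarrow> ('m \<Rightarrow> 'm2) \<Rightarrow> ('o2,'m2,'v) psh \<Rightarrow> ('o,'m,'v) psh" where
  "pull Fo Fm G = ((\<lambda>x. fst G (Fo x)), (\<lambda>x y f. snd G (Fo x) (Fo y) (Fm f)))"

text \<open>Left Kan extension F_! chi (y) = coend over x of Y(y,Fx) x chi(x), as a quotient of triples.\<close>
definition lan_carrier :: "('ox,'mx) cat \<Rightarrow> ('oy,'my) cat \<Rightarrow> ('ox \<Rightarrow> 'oy) \<Rightarrow> ('ox,'mx,'v) psh \<Rightarrow> 'oy \<Rightarrow> ('ox \<times> 'my \<times> 'v) set" where
  "lan_carrier X Y Fo \<chi> y = {(x,f,a). x \<in> cOb X \<and> f \<in> cHom Y y (Fo x) \<and> a \<in> fst \<chi> x}"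

definition lan_rel :: "('ox,'mx) cat \<Rightarrow> ('oy,'my) cat \<Rightarrow> ('ox \<Rightarrow> 'oy) \<Rightarrow> ('mx \<Rightarrow> 'my) \<Rightarrow> ('ox,'mx,'v) psh \<Rightarrow> 'oy \<Rightarrow> (('ox \<times> 'my \<times> 'v) \<times> ('ox \<times> 'my \<times> 'v)) set" where
  "lan_rel X Y Fo Fm \<chi> y = {((x, f, snd \<chi> x x' u a), (x', cCmp Y f (Fm u), a)) | x x' u f a.
       u \<in> cHom X x x' \<and> f \<in> cHom Y y (Fo x) \<and> a \<in> fst \<chi> x'}"

definition lan_eq :: "('ox,'mx) cat \<Rightarrow> ('oy,'my) cat \<Rightarrow> ('ox \<Rightarrow> 'oy) \<Rightarrow> ('mx \<Rightarrow> 'my) \<Rightarrow> ('ox,'mx,'v) psh \<Rightarrow> 'oy \<Rightarrow> (('ox \<times> 'my \<times> 'v) \<times> ('ox \<times> 'my \<times> 'v)) set" where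
  "lan_eq X Y Fo Fm \<chi> y = (lan_rel X Y Fo Fm \<chi> y \<union> (lan_rel X Y Fo Fm \<chi> y)\<inverse>)\<^sup>*"

definition lan :: "('ox,'mx) cat \<Rightarrow> ('oy,'my) cat \<Rightarrow> ('ox \<Rightarrow> 'oy) \<Rightarrow> ('mx \<Rightarrow> 'my) \<Rightarrow> ('ox,'mx,'v) psh \<Rightarrow> ('oy,'my,('ox \<times> 'my \<times> 'v) set) psh" where
  "lan X Y Fo Fm \<chi> =
     ((\<lambda>y. lan_carrier X Y Fo \<chi> y // lan_eq X Y Fo Fm \<chi> y),
      (\<lambda>y1 y2 g S. lan_eq X Y Fo Fm \<chi> y1 `` ((\<lambda>(x,f,a). (x, cCmp Y g f, a)) ` S)))"

definition bra :: "('a,'c) cat \<Rightarrow> ('p \<times> 'c) \<Rightarrow> ('c \<times> 'p) \<Rightarrow> ('p \<times> 'c \<times> 'p)" where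
  "bra T x y = (fst x, cCmp T (snd x) (fst y), snd y)"

text \<open>Der(<- | y>_B), a presheaf on B+, and Der(<x | ->_B), a presheaf on B-.\<close>
definition DerL :: "('p,'d) cat \<Rightarrow> ('a,'c) cat \<Rightarrow> ('d \<Rightarrow> 'c) \<Rightarrow> ('c \<times> 'p) \<Rightarrow> ('p \<times> 'c, 'd, 'd) psh" where
  "DerL D T tm y = pull (\<lambda>x. bra T x y) (\<lambda>\<beta>. (\<beta>, cId D (snd y))) (Der D tm)"

definition DerR :: "('p,'d) cat \<Rightarrow> ('a,'c) cat \<Rightarrow> ('d \<Rightarrow> 'c) \<Rightarrow> ('p \<times> 'c) \<Rightarrow> ('c \<times> 'p, 'd, 'd) psh" where
  "DerR D T tm x = pull (\<lambda>y. bra T x y) (\<lambda>\<gamma>. (cId D (fst x), \<gamma>)) (Der D tm)"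

text \<open>phi^{perp_B}: presheaf on B- for phi a presheaf on B+.\<close>
definition perp :: "('p,'d) cat \<Rightarrow> ('a,'c) cat \<Rightarrow> ('p \<Rightarrow> 'a) \<Rightarrow> ('d \<Rightarrow> 'c) \<Rightarrow> 'a \<Rightarrow>
    ('p \<times> 'c, 'd, 'v) psh \<Rightarrow> ('c \<times> 'p, 'd, ('p \<times> 'c) \<Rightarrow> 'v \<Rightarrow> 'd) psh" where
  "perp D T to tm B \<phi> =
     ((\<lambda>y. {\<eta>. nat_trans (Bplus D T to tm B) \<phi> (DerL D T tm y) \<eta>}),
      (\<lambda>y1 y2 g \<eta>. (\<lambda>x. if x \<in> cOb (Bplus D T to tm B)
          then (\<lambda>a. if a \<in> fst \<phi> x
                     then snd (Der D tm) (bra T x y1) (bra T x y2) (cId D (fst x), g) (\<eta> x a)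
                     else undefined)
          else undefined)))"

text \<open>^{perp_B} psi: presheaf on B+ for psi a presheaf on B-.\<close>
definition lperp :: "('p,'d) cat \<Rightarrow> ('a,'c) cat \<Rightarrow> ('p \<Rightarrow> 'a) \<Rightarrow> ('d \<Rightarrow> 'c) \<Rightarrow> 'a \<Rightarrow>
    ('c \<times> 'p, 'd, 'v) psh \<Rightarrow> ('p \<times> 'c, 'd, ('c \<times> 'p) \<Rightarrow> 'v \<Rightarrow> 'd) psh" where
  "lperp D T to tm B \<psi> =
     ((\<lambda>x. {\<eta>. nat_trans (Bminus D T to tm B) \<psi> (DerR D T tm x) \<eta>}),
      (\<lambda>x1 x2 f \<eta>. (\<lambda>y. if y \<in> cOb (Bminus D T to tm B)
          then (\<lambda>a. if a \<in> fst \<psi> y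
                     then snd (Der D tm) (bra T x1 y) (bra T x2 y) (f, cId D (snd y)) (\<eta> y a)
                     else undefined)
          else undefined)))"

end

theory Submission
  imports Defs "HOL-Library.FuncSet"
begin

(*
  Everything rests on the adjunction F_! -| F^* between left Kan extension and restriction of
  presheaves, together with the balance of the bracket: <c+ x | y>_B = <x | c- y>_A by
  associativity in T, so that (c-)^* Der<x|->_A = Der<c+ x|->_B and (c+)^* Der<-|y>_B = Der<-|c- y>_A.

  (a) An element of ^perp_A((c-)_! psi) at x is a transformation (c-)_! psi => Der<x|->_A. By the
  adjunction these correspond to transformations psi => (c-)^* Der<x|->_A = Der<c+ x|->_B, that is,
  to elements of ^perp_B psi at c+ x. The correspondence is precomposition with the unit, which
  commutes with the action of A+, so it is an isomorphism of presheaves.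

  (b) Whiskering along c+ turns a transformation rho => Der<-|y>_B into one
  (c+)^* rho => Der<-|c- y>_A. This is a map rho^perp_B => (c-)^* (((c+)^* rho)^perp_A), and its
  transpose under the adjunction is the required transformation. (c) is dual, whiskering along c-.
*)

section \<open>Presheaves and natural transformations\<close>

lemma
  assumes "category C"
  shows category_hom_ob: "f \<in> cHom C x y \<Longrightarrow> x \<in> cOb C \<and> y \<in> cOb C"
    and category_id_hom: "x \<in> cOb C \<Longrightarrow> cId C x \<in> cHom C x x"
    and category_comp_hom: "f \<in> cHom C x y \<Longrightarrow> g \<in> cHom C y z \<Longrightarrow> cCmp C f g \<in> cHom C x z"
    and category_id_left: "f \<in> cHom C x y \<Longrightarrow> cCmp C (cId C x) f = f"
    and category_id_right: "f \<in> cHom C x y \<Longrightarrow> cCmp C f (cId C y) = f"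
    and category_assoc: "f \<in> cHom C w x \<Longrightarrow> g \<in> cHom C x y \<Longrightarrow> h \<in> cHom C y z \<Longrightarrow>
        cCmp C (cCmp C f g) h = cCmp C f (cCmp C g h)"
  using assms unfolding category_def by blast+

lemma
  assumes "is_functor C C' Fo Fm"
  shows functor_ob: "x \<in> cOb C \<Longrightarrow> Fo x \<in> cOb C'"
    and functor_hom: "f \<in> cHom C x y \<Longrightarrow> Fm f \<in> cHom C' (Fo x) (Fo y)"
    and functor_id: "x \<in> cOb C \<Longrightarrow> Fm (cId C x) = cId C' (Fo x)"
    and functor_comp: "f \<in> cHom C x y \<Longrightarrow> g \<in> cHom C y z \<Longrightarrow> Fm (cCmp C f g) = cCmp C' (Fm f) (Fm g)"
  using assms unfolding is_functor_def by blast+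

lemma
  assumes "presheaf C F"
  shows presheaf_act: "f \<in> cHom C x y \<Longrightarrow> a \<in> fst F y \<Longrightarrow> snd F x y f a \<in> fst F x"
    and presheaf_id: "x \<in> cOb C \<Longrightarrow> a \<in> fst F x \<Longrightarrow> snd F x x (cId C x) a = a"
    and presheaf_comp: "f \<in> cHom C x y \<Longrightarrow> g \<in> cHom C y z \<Longrightarrow> a \<in> fst F z \<Longrightarrow>
        snd F x z (cCmp C f g) a = snd F x y f (snd F y z g a)"
  using assms unfolding presheaf_def by blast+

lemma
  assumes "nat_trans C F G \<eta>"
  shows nat_trans_value: "x \<in> cOb C \<Longrightarrow> a \<in> fst F x \<Longrightarrow> \<eta> x a \<in> fst G x"
    and nat_trans_natural: "f \<in> cHom C x y \<Longrightarrow> a \<in> fst F y \<Longrightarrow> \<eta> x (snd F x y f a) = snd G x y f (\<eta> y a)"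
  using assms unfolding nat_trans_def by blast+

lemma pull_simps [simp]:
  "fst (pull Fo Fm G) x = fst G (Fo x)" "snd (pull Fo Fm G) x y f = snd G (Fo x) (Fo y) (Fm f)"
  by (simp_all add: pull_def)

(* nat_trans demands the value undefined off the objects and off fst F x, so transformations
   are built with restrict. *)
lemma nat_trans_restrict:
  assumes "nat_trans C F G \<eta>"
  shows "(\<lambda>x\<in>cOb C. \<lambda>a\<in>fst F x. \<eta> x a) = \<eta>"
  using assms unfolding nat_trans_def by (auto simp: fun_eq_iff)

lemma nat_trans_restrictI:
  assumes "\<And>x a. x \<in> cOb C \<Longrightarrow> a \<in> fst F x \<Longrightarrow> h x a \<in> fst G x"
    and "\<And>x y f a. f \<in> cHom C x y \<Longrightarrow> a \<in> fst F y \<Longrightarrow> x \<in> cOb C \<Longrightarrow> y \<in> cOb C \<Longrightarrow>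
           snd F x y f a \<in> fst F x \<Longrightarrow> h x (snd F x y f a) = snd G x y f (h y a)"
    and "category C" "presheaf C F"
  shows "nat_trans C F G (\<lambda>x\<in>cOb C. \<lambda>a\<in>fst F x. h x a)"
  using assms category_hom_ob[OF assms(3)] presheaf_act[OF assms(4)]
  unfolding nat_trans_def by auto

lemma nat_trans_cong:
  assumes "\<And>x. x \<in> cOb C \<Longrightarrow> fst G x = fst G' x" and "snd G = snd G'"
  shows "nat_trans C F G \<eta> \<longleftrightarrow> nat_trans C F G' \<eta>"
  using assms unfolding nat_trans_def by simp

lemma presheaf_pull:
  assumes "is_functor C C' Fo Fm" "presheaf C' G"
  shows "presheaf C (pull Fo Fm G)"
  using assms unfolding presheaf_def pull_def
  by (auto simp: functor_ob[OF assms(1)] functor_hom[OF assms(1)] functor_id[OF assms(1)]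
      functor_comp[OF assms(1)])

lemma nat_trans_pull:
  assumes "category C" "is_functor C C' Fo Fm" "nat_trans C' F G \<eta>"
  shows "nat_trans C (pull Fo Fm F) (pull Fo Fm G) (\<lambda>x\<in>cOb C. \<eta> (Fo x))"
  using assms category_hom_ob[OF assms(1)] unfolding nat_trans_def pull_def
  by (auto simp: functor_ob[OF assms(2)] functor_hom[OF assms(2)])

lemma psh_iso_inverse:
  assumes "category C" "presheaf C G" "nat_trans C G F \<eta>"
    and bij: "\<And>x. x \<in> cOb C \<Longrightarrow> bij_betw (\<eta> x) (fst G x) (fst F x)"
  shows "psh_iso C F G"
proof -
  define \<theta> where "\<theta> = (\<lambda>x\<in>cOb C. \<lambda>b\<in>fst F x. the_inv_into (fst G x) (\<eta> x) b)"
  have inv: "\<theta> x b \<in> fst G x" "\<eta> x (\<theta> x b) = b" if "x \<in> cOb C" "b \<in> fst F x" for x b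
    using that bij[OF that(1)] by (auto simp: \<theta>_def bij_betw_def the_inv_into_into f_the_inv_into_f)
  have inv': "\<theta> x (\<eta> x a) = a" if "x \<in> cOb C" "a \<in> fst G x" for x a
    using that bij[OF that(1)] nat_trans_value[OF assms(3) that]
    by (auto simp: \<theta>_def bij_betw_def the_inv_into_f_f)
  have "nat_trans C F G \<theta>"
    unfolding nat_trans_def
  proof (intro conjI allI ballI impI)
    fix x y f b assume f: "f \<in> cHom C x y" and b: "b \<in> fst F y"
    have x: "x \<in> cOb C" and y: "y \<in> cOb C" using category_hom_ob[OF assms(1) f] by auto
    have "snd F x y f b = \<eta> x (snd G x y f (\<theta> y b))"
      using nat_trans_natural[OF assms(3) f inv(1)[OF y b]] inv(2)[OF y b] by simp
    then show "\<theta> x (snd F x y f b) = snd G x y f (\<theta> y b)"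
      using inv'[OF x presheaf_act[OF assms(2) f inv(1)[OF y b]]] by simp
  qed (use inv in \<open>auto simp: \<theta>_def\<close>)
  moreover have "bij_betw (\<theta> x) (fst F x) (fst G x)" if "x \<in> cOb C" for x
    using bij[OF that] that by (simp add: \<theta>_def bij_betw_the_inv_into cong: bij_betw_cong)
  ultimately show ?thesis unfolding psh_iso_def by blast
qed

section \<open>Left Kan extensions\<close>

(* The two directions of the adjunction F_! -| F^*: lan_restrict precomposes with the unit
   chi => F^* (F_! chi), and lan_transpose is its inverse. *)
definition lan_transpose ::
  "('ox,'mx) cat \<Rightarrow> ('oy,'my) cat \<Rightarrow> ('ox \<Rightarrow> 'oy) \<Rightarrow> ('mx \<Rightarrow> 'my) \<Rightarrow> ('ox,'mx,'v) psh \<Rightarrow>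
     ('oy,'my,'w) psh \<Rightarrow> ('ox \<Rightarrow> 'v \<Rightarrow> 'w) \<Rightarrow> 'oy \<Rightarrow> ('ox \<times> 'my \<times> 'v) set \<Rightarrow> 'w" where
  "lan_transpose X Y Fo Fm \<chi> G \<theta> =
     (\<lambda>y\<in>cOb Y. \<lambda>S\<in>fst (lan X Y Fo Fm \<chi>) y.
        case SOME t. t \<in> S of (x, f, a) \<Rightarrow> snd G y (Fo x) f (\<theta> x a))"

definition lan_restrict ::
  "('ox,'mx) cat \<Rightarrow> ('oy,'my) cat \<Rightarrow> ('ox \<Rightarrow> 'oy) \<Rightarrow> ('mx \<Rightarrow> 'my) \<Rightarrow> ('ox,'mx,'v) psh \<Rightarrow>
     ('oy \<Rightarrow> ('ox \<times> 'my \<times> 'v) set \<Rightarrow> 'w) \<Rightarrow> 'ox \<Rightarrow> 'v \<Rightarrow> 'w" where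
  "lan_restrict X Y Fo Fm \<chi> \<eta> =
     (\<lambda>x\<in>cOb X. \<lambda>a\<in>fst \<chi> x. \<eta> (Fo x) (lan_eq X Y Fo Fm \<chi> (Fo x) `` {(x, cId Y (Fo x), a)}))"

locale lan_data =
  fixes X :: "('ox,'mx) cat" and Y :: "('oy,'my) cat" and Fo :: "'ox \<Rightarrow> 'oy" and Fm :: "'mx \<Rightarrow> 'my"
    and \<chi> :: "('ox,'mx,'v) psh"
  assumes category_X: "category X" and category_Y: "category Y"
    and functor_F: "is_functor X Y Fo Fm" and presheaf_\<chi>: "presheaf X \<chi>"
begin

abbreviation "cls y t \<equiv> lan_eq X Y Fo Fm \<chi> y `` {t}"

lemma lan_carrier_iff [simp]:
  "(x, f, a) \<in> lan_carrier X Y Fo \<chi> y \<longleftrightarrow> x \<in> cOb X \<and> f \<in> cHom Y y (Fo x) \<and> a \<in> fst \<chi> x"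
  by (simp add: lan_carrier_def)

lemma lan_eq_respect:
  assumes "\<And>x x' u f a. u \<in> cHom X x x' \<Longrightarrow> f \<in> cHom Y y (Fo x) \<Longrightarrow> a \<in> fst \<chi> x' \<Longrightarrow>
      h (x, f, snd \<chi> x x' u a) = h (x', cCmp Y f (Fm u), a)"
  shows "(t, t') \<in> lan_eq X Y Fo Fm \<chi> y \<Longrightarrow> h t = h t'"
  unfolding lan_eq_def
proof (induction rule: rtrancl_induct)
  case (step s s')
  then show ?case using assms unfolding lan_rel_def by auto
qed simp

lemma lan_eq_refl: "(t, t) \<in> lan_eq X Y Fo Fm \<chi> y"
  by (simp add: lan_eq_def)

lemma lan_rel_cls:
  assumes "(t, t') \<in> lan_rel X Y Fo Fm \<chi> y"
  shows "cls y t = cls y t'"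
proof -
  have "(t, t') \<in> lan_eq X Y Fo Fm \<chi> y" "(t', t) \<in> lan_eq X Y Fo Fm \<chi> y"
    using assms unfolding lan_eq_def by blast+
  then show ?thesis
    unfolding lan_eq_def by (auto intro: rtrancl_trans)
qed

lemma lan_mem_iff: "S \<in> fst (lan X Y Fo Fm \<chi>) y \<longleftrightarrow> (\<exists>t\<in>lan_carrier X Y Fo \<chi> y. S = cls y t)"
  by (simp add: lan_def quotient_def)

lemma lan_memE:
  assumes "S \<in> fst (lan X Y Fo Fm \<chi>) y"
  obtains x f a where "x \<in> cOb X" "f \<in> cHom Y y (Fo x)" "a \<in> fst \<chi> x" "S = cls y (x, f, a)"
  using assms unfolding lan_mem_iff by (auto simp: lan_carrier_def)

lemma lan_cls_mem:
  "x \<in> cOb X \<Longrightarrow> f \<in> cHom Y y (Fo x) \<Longrightarrow> a \<in> fst \<chi> x \<Longrightarrow> cls y (x, f, a) \<in> fst (lan X Y Fo Fm \<chi>) y"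
  unfolding lan_mem_iff by force

lemma lan_eq_postcompose:
  assumes g: "g \<in> cHom Y y1 y2"
  shows "(s, s') \<in> lan_eq X Y Fo Fm \<chi> y2 \<Longrightarrow>
    ((\<lambda>(x, f, a). (x, cCmp Y g f, a)) s, (\<lambda>(x, f, a). (x, cCmp Y g f, a)) s') \<in> lan_eq X Y Fo Fm \<chi> y1"
  unfolding lan_eq_def
proof (induction rule: rtrancl_induct)
  case (step s' s'')
  let ?m = "\<lambda>(x, f, a). (x, cCmp Y g f, a)"
  have "(?m s', ?m s'') \<in> lan_rel X Y Fo Fm \<chi> y1 \<union> (lan_rel X Y Fo Fm \<chi> y1)\<inverse>"
  proof -
    have "((x, cCmp Y g f, snd \<chi> x x' u a), (x', cCmp Y g (cCmp Y f (Fm u)), a)) \<in> lan_rel X Y Fo Fm \<chi> y1"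
      if "u \<in> cHom X x x'" "f \<in> cHom Y y2 (Fo x)" "a \<in> fst \<chi> x'" for x x' u f a
      using that g category_comp_hom[OF category_Y g]
        category_assoc[OF category_Y g _ functor_hom[OF functor_F]]
      unfolding lan_rel_def by fastforce
    then show ?thesis using step(2) unfolding lan_rel_def by auto
  qed
  then show ?case using step(3) by (meson rtrancl.rtrancl_into_rtrancl)
qed simp

lemma lan_act_cls:
  assumes "g \<in> cHom Y y1 y2"
  shows "snd (lan X Y Fo Fm \<chi>) y1 y2 g (cls y2 (x, f, a)) = cls y1 (x, cCmp Y g f, a)"
proof -
  let ?m = "\<lambda>(x, f, a). (x, cCmp Y g f, a)"
  have "lan_eq X Y Fo Fm \<chi> y1 `` (?m ` cls y2 (x, f, a)) = cls y1 (x, cCmp Y g f, a)"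
  proof
    show "lan_eq X Y Fo Fm \<chi> y1 `` (?m ` cls y2 (x, f, a)) \<subseteq> cls y1 (x, cCmp Y g f, a)"
      using lan_eq_postcompose[OF assms, of "(x, f, a)"] unfolding lan_eq_def
      by (force intro: rtrancl_trans)
    show "cls y1 (x, cCmp Y g f, a) \<subseteq> lan_eq X Y Fo Fm \<chi> y1 `` (?m ` cls y2 (x, f, a))"
      using lan_eq_refl[where y = y2 and t = "(x, f, a)"] by force
  qed
  then show ?thesis by (simp add: lan_def)
qed

lemma presheaf_lan: "presheaf Y (lan X Y Fo Fm \<chi>)"
  unfolding presheaf_def
proof (intro conjI allI ballI impI)
  fix y1 y2 g S assume g: "g \<in> cHom Y y1 y2" and "S \<in> fst (lan X Y Fo Fm \<chi>) y2"
  then obtain x f a where "x \<in> cOb X" "f \<in> cHom Y y2 (Fo x)" "a \<in> fst \<chi> x" "S = cls y2 (x, f, a)"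
    by (auto elim: lan_memE)
  then show "snd (lan X Y Fo Fm \<chi>) y1 y2 g S \<in> fst (lan X Y Fo Fm \<chi>) y1"
    using lan_act_cls[OF g] lan_cls_mem category_comp_hom[OF category_Y g] by simp
next
  fix y S assume "y \<in> cOb Y" "S \<in> fst (lan X Y Fo Fm \<chi>) y"
  then show "snd (lan X Y Fo Fm \<chi>) y y (cId Y y) S = S"
    by (auto elim!: lan_memE simp: lan_act_cls category_id_hom[OF category_Y]
        category_id_left[OF category_Y])
next
  fix y1 y2 y3 g1 g2 S
  assume g: "g1 \<in> cHom Y y1 y2" "g2 \<in> cHom Y y2 y3" and "S \<in> fst (lan X Y Fo Fm \<chi>) y3"
  then show "snd (lan X Y Fo Fm \<chi>) y1 y3 (cCmp Y g1 g2) S =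
      snd (lan X Y Fo Fm \<chi>) y1 y2 g1 (snd (lan X Y Fo Fm \<chi>) y2 y3 g2 S)"
    by (auto elim!: lan_memE simp: lan_act_cls category_comp_hom[OF category_Y]
        category_assoc[OF category_Y])
qed

context
  fixes G :: "('oy,'my,'w) psh" and \<theta> :: "'ox \<Rightarrow> 'v \<Rightarrow> 'w"
  assumes presheaf_G: "presheaf Y G" and \<theta>: "nat_trans X \<chi> (pull Fo Fm G) \<theta>"
begin

lemma lan_transpose_cls:
  assumes "y \<in> cOb Y" "x \<in> cOb X" "f \<in> cHom Y y (Fo x)" "a \<in> fst \<chi> x"
  shows "lan_transpose X Y Fo Fm \<chi> G \<theta> y (cls y (x, f, a)) = snd G y (Fo x) f (\<theta> x a)"
proof -
  let ?h = "\<lambda>(x, f, a). snd G y (Fo x) f (\<theta> x a)"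
  have "?h t = ?h t'" if "(t, t') \<in> lan_eq X Y Fo Fm \<chi> y" for t t'
  proof (rule lan_eq_respect[OF _ that])
    fix x x' u f a assume u: "u \<in> cHom X x x'" and f: "f \<in> cHom Y y (Fo x)" and a: "a \<in> fst \<chi> x'"
    have "x' \<in> cOb X" using category_hom_ob[OF category_X u] by simp
    then have "\<theta> x' a \<in> fst G (Fo x')" using nat_trans_value[OF \<theta> _ a] by simp
    then show "?h (x, f, snd \<chi> x x' u a) = ?h (x', cCmp Y f (Fm u), a)"
      using nat_trans_natural[OF \<theta> u] a f
      by (simp add: presheaf_comp[OF presheaf_G f functor_hom[OF functor_F u]])
  qed
  moreover have "(SOME t. t \<in> cls y (x, f, a)) \<in> cls y (x, f, a)"
    by (rule someI) (rule lan_eq_refl[simplified, THEN ImageI, OF singletonI])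
  ultimately show ?thesis
    using assms lan_cls_mem[of x f y a] unfolding lan_transpose_def by fastforce
qed

lemma nat_trans_lan_transpose: "nat_trans Y (lan X Y Fo Fm \<chi>) G (lan_transpose X Y Fo Fm \<chi> G \<theta>)"
  unfolding nat_trans_def
proof (intro conjI allI ballI impI)
  fix y S assume y: "y \<in> cOb Y" and "S \<in> fst (lan X Y Fo Fm \<chi>) y"
  then obtain x f a where xfa: "x \<in> cOb X" "f \<in> cHom Y y (Fo x)" "a \<in> fst \<chi> x" "S = cls y (x, f, a)"
    by (auto elim: lan_memE)
  show "lan_transpose X Y Fo Fm \<chi> G \<theta> y S \<in> fst G y"
    using lan_transpose_cls[OF y xfa(1-3)] xfa nat_trans_value[OF \<theta>]
      presheaf_act[OF presheaf_G] by simp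
next
  fix y1 y2 g S assume g: "g \<in> cHom Y y1 y2" and "S \<in> fst (lan X Y Fo Fm \<chi>) y2"
  then obtain x f a where xfa: "x \<in> cOb X" "f \<in> cHom Y y2 (Fo x)" "a \<in> fst \<chi> x" "S = cls y2 (x, f, a)"
    by (auto elim: lan_memE)
  have y: "y1 \<in> cOb Y" "y2 \<in> cOb Y" using category_hom_ob[OF category_Y g] by auto
  show "lan_transpose X Y Fo Fm \<chi> G \<theta> y1 (snd (lan X Y Fo Fm \<chi>) y1 y2 g S) =
      snd G y1 y2 g (lan_transpose X Y Fo Fm \<chi> G \<theta> y2 S)"
    using xfa nat_trans_value[OF \<theta>, of x a]
    by (simp add: lan_act_cls[OF g] lan_transpose_cls y category_comp_hom[OF category_Y g]
        presheaf_comp[OF presheaf_G g])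
qed (auto simp: lan_transpose_def)

lemma lan_restrict_transpose: "lan_restrict X Y Fo Fm \<chi> (lan_transpose X Y Fo Fm \<chi> G \<theta>) = \<theta>"
proof -
  have "lan_transpose X Y Fo Fm \<chi> G \<theta> (Fo x) (cls (Fo x) (x, cId Y (Fo x), a)) = \<theta> x a"
    if "x \<in> cOb X" "a \<in> fst \<chi> x" for x a
    using that functor_ob[OF functor_F] category_id_hom[OF category_Y] nat_trans_value[OF \<theta>]
    by (simp add: lan_transpose_cls presheaf_id[OF presheaf_G])
  then show ?thesis
    unfolding lan_restrict_def by (subst nat_trans_restrict[OF \<theta>, symmetric]) (auto intro!: restrict_ext)
qed

end

lemma nat_trans_lan_restrict:
  assumes \<eta>: "nat_trans Y (lan X Y Fo Fm \<chi>) G \<eta>"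
  shows "nat_trans X \<chi> (pull Fo Fm G) (lan_restrict X Y Fo Fm \<chi> \<eta>)"
  unfolding nat_trans_def
proof (intro conjI allI ballI impI)
  fix x a assume "x \<in> cOb X" "a \<in> fst \<chi> x"
  then show "lan_restrict X Y Fo Fm \<chi> \<eta> x a \<in> fst (pull Fo Fm G) x"
    using nat_trans_value[OF \<eta>] lan_cls_mem functor_ob[OF functor_F] category_id_hom[OF category_Y]
    by (simp add: lan_restrict_def)
next
  fix x x' u a assume u: "u \<in> cHom X x x'" and a: "a \<in> fst \<chi> x'"
  have x: "x \<in> cOb X" "x' \<in> cOb X" using category_hom_ob[OF category_X u] by auto
  have Fu: "Fm u \<in> cHom Y (Fo x) (Fo x')" using functor_hom[OF functor_F u] .
  have Fx: "Fo x \<in> cOb Y" "Fo x' \<in> cOb Y" using x functor_ob[OF functor_F] by auto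
  have "((x, cId Y (Fo x), snd \<chi> x x' u a), (x', cCmp Y (cId Y (Fo x)) (Fm u), a)) \<in> lan_rel X Y Fo Fm \<chi> (Fo x)"
    unfolding lan_rel_def using u a category_id_hom[OF category_Y Fx(1)] by blast
  then have "cls (Fo x) (x, cId Y (Fo x), snd \<chi> x x' u a) =
      snd (lan X Y Fo Fm \<chi>) (Fo x) (Fo x') (Fm u) (cls (Fo x') (x', cId Y (Fo x'), a))"
    by (simp add: lan_rel_cls lan_act_cls[OF Fu] category_id_left[OF category_Y Fu]
        category_id_right[OF category_Y Fu])
  then show "lan_restrict X Y Fo Fm \<chi> \<eta> x (snd \<chi> x x' u a) =
      snd (pull Fo Fm G) x x' u (lan_restrict X Y Fo Fm \<chi> \<eta> x' a)"
    using x a presheaf_act[OF presheaf_\<chi> u a] Fx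
      nat_trans_natural[OF \<eta> Fu lan_cls_mem[OF x(2) category_id_hom[OF category_Y Fx(2)] a]]
    by (simp add: lan_restrict_def)
qed (auto simp: lan_restrict_def)

lemma lan_transpose_restrict:
  assumes "presheaf Y G" and \<eta>: "nat_trans Y (lan X Y Fo Fm \<chi>) G \<eta>"
  shows "lan_transpose X Y Fo Fm \<chi> G (lan_restrict X Y Fo Fm \<chi> \<eta>) = \<eta>"
proof -
  have "lan_transpose X Y Fo Fm \<chi> G (lan_restrict X Y Fo Fm \<chi> \<eta>) y S = \<eta> y S"
    if y: "y \<in> cOb Y" and S: "S \<in> fst (lan X Y Fo Fm \<chi>) y" for y S
  proof -
    obtain x f a where xfa: "x \<in> cOb X" "f \<in> cHom Y y (Fo x)" "a \<in> fst \<chi> x" "S = cls y (x, f, a)"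
      using S by (rule lan_memE)
    have Fx: "Fo x \<in> cOb Y" using functor_ob[OF functor_F xfa(1)] .
    let ?u = "cls (Fo x) (x, cId Y (Fo x), a)"
    have u: "?u \<in> fst (lan X Y Fo Fm \<chi>) (Fo x)"
      using lan_cls_mem[OF xfa(1) category_id_hom[OF category_Y Fx] xfa(3)] .
    have "lan_transpose X Y Fo Fm \<chi> G (lan_restrict X Y Fo Fm \<chi> \<eta>) y S =
        snd G y (Fo x) f (lan_restrict X Y Fo Fm \<chi> \<eta> x a)"
      unfolding xfa(4) using xfa(1-3) by (rule lan_transpose_cls[OF assms(1) nat_trans_lan_restrict[OF \<eta>] y])
    also have "\<dots> = \<eta> y (snd (lan X Y Fo Fm \<chi>) y (Fo x) f ?u)"
      using xfa nat_trans_natural[OF \<eta> xfa(2) u] by (simp add: lan_restrict_def)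
    also have "\<dots> = \<eta> y S"
      by (simp add: xfa lan_act_cls category_id_right[OF category_Y xfa(2)])
    finally show ?thesis .
  qed
  then show ?thesis
    unfolding lan_transpose_def by (subst nat_trans_restrict[OF \<eta>, symmetric]) (auto intro!: restrict_ext)
qed

lemma bij_betw_lan_restrict:
  assumes "presheaf Y G"
  shows "bij_betw (lan_restrict X Y Fo Fm \<chi>)
    {\<eta>. nat_trans Y (lan X Y Fo Fm \<chi>) G \<eta>} {\<theta>. nat_trans X \<chi> (pull Fo Fm G) \<theta>}"
  by (rule bij_betw_byWitness[where f' = "lan_transpose X Y Fo Fm \<chi> G"])
    (auto simp: assms lan_transpose_restrict lan_restrict_transpose nat_trans_lan_restrict
      nat_trans_lan_transpose)

end

section \<open>The categories B+ and B-\<close>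

lemma Bplus_ob_iff:
  "x \<in> cOb (Bplus D T to tm B) \<longleftrightarrow> fst x \<in> cOb D \<and> snd x \<in> cHom T (to (fst x)) B"
  by (cases x) (simp add: Bplus_def Bplus_ob_def)

lemma Bplus_hom_iff:
  "\<alpha> \<in> cHom (Bplus D T to tm B) x y \<longleftrightarrow> \<alpha> \<in> cHom D (fst x) (fst y) \<and>
     x \<in> cOb (Bplus D T to tm B) \<and> y \<in> cOb (Bplus D T to tm B) \<and> snd x = cCmp T (tm \<alpha>) (snd y)"
  by (cases x; cases y) (auto simp: Bplus_def)

lemma Bplus_cmp [simp]: "cCmp (Bplus D T to tm B) = cCmp D"
  by (simp add: Bplus_def)

lemma Bplus_id [simp]: "cId (Bplus D T to tm B) x = cId D (fst x)"
  by (cases x) (simp add: Bplus_def)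

lemma Bminus_ob_iff:
  "y \<in> cOb (Bminus D T to tm B) \<longleftrightarrow> snd y \<in> cOb D \<and> fst y \<in> cHom T B (to (snd y))"
  by (cases y) (simp add: Bminus_def Bminus0_def opcat_def Bminus_ob_def)

lemma Bminus_hom_iff:
  "\<alpha> \<in> cHom (Bminus D T to tm B) x y \<longleftrightarrow> \<alpha> \<in> cHom D (snd y) (snd x) \<and>
     x \<in> cOb (Bminus D T to tm B) \<and> y \<in> cOb (Bminus D T to tm B) \<and> cCmp T (fst y) (tm \<alpha>) = fst x"
  by (cases x; cases y) (auto simp: Bminus_def Bminus0_def opcat_def)

lemma Bminus_cmp [simp]: "cCmp (Bminus D T to tm B) f g = cCmp D g f"
  by (simp add: Bminus_def Bminus0_def opcat_def)

lemma Bminus_id [simp]: "cId (Bminus D T to tm B) y = cId D (snd y)"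
  by (cases y) (simp add: Bminus_def Bminus0_def opcat_def)

lemma cplus_simps [simp]: "fst (cplus T c x) = fst x" "snd (cplus T c x) = cCmp T (snd x) c"
  by (simp_all add: cplus_def split: prod.split)

lemma cminus_simps [simp]: "fst (cminus T c y) = cCmp T c (fst y)" "snd (cminus T c y) = snd y"
  by (simp_all add: cminus_def split: prod.split)

lemma DerR_simps [simp]:
  "fst (DerR D T tm x) y = derivs D tm (fst x) (snd y) (cCmp T (snd x) (fst y))"
  "snd (DerR D T tm x) y1 y2 g \<alpha> = cCmp D (cCmp D (cId D (fst x)) \<alpha>) g"
  by (simp_all add: DerR_def Der_def bra_def)

lemma DerL_simps [simp]:
  "fst (DerL D T tm y) x = derivs D tm (fst x) (snd y) (cCmp T (snd x) (fst y))"
  "snd (DerL D T tm y) x1 x2 f \<alpha> = cCmp D (cCmp D f \<alpha>) (cId D (snd y))"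
  by (simp_all add: DerL_def Der_def bra_def)

lemma Der_snd [simp]: "snd (Der D tm) P Q (\<beta>, \<gamma>) \<alpha> = cCmp D (cCmp D \<beta> \<alpha>) \<gamma>"
  by (simp add: Der_def)

lemma derivs_iff [simp]: "\<alpha> \<in> derivs D tm P Q c \<longleftrightarrow> \<alpha> \<in> cHom D P Q \<and> tm \<alpha> = c"
  by (simp add: derivs_def)

lemma lperp_simps:
  "fst (lperp D T to tm B \<psi>) x = {\<eta>. nat_trans (Bminus D T to tm B) \<psi> (DerR D T tm x) \<eta>}"
  "snd (lperp D T to tm B \<psi>) x1 x2 f \<eta> =
     (\<lambda>y\<in>cOb (Bminus D T to tm B). \<lambda>a\<in>fst \<psi> y. cCmp D (cCmp D f (\<eta> y a)) (cId D (snd y)))"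
  by (simp_all add: lperp_def bra_def restrict_def cong: if_cong)

lemma perp_simps:
  "fst (perp D T to tm B \<rho>) y = {\<eta>. nat_trans (Bplus D T to tm B) \<rho> (DerL D T tm y) \<eta>}"
  "snd (perp D T to tm B \<rho>) y1 y2 g \<eta> =
     (\<lambda>x\<in>cOb (Bplus D T to tm B). \<lambda>a\<in>fst \<rho> x. cCmp D (cCmp D (cId D (fst x)) (\<eta> x a)) g)"
  by (simp_all add: perp_def bra_def restrict_def cong: if_cong)

locale refinement_setting =
  fixes D :: "('p,'d) cat" and T :: "('a,'c) cat" and to :: "'p \<Rightarrow> 'a" and tm :: "'d \<Rightarrow> 'c"
  assumes refinement_system: "refinement_system D T to tm"
begin

lemma category_D: "category D" and category_T: "category T" and functor_t: "is_functor D T to tm"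
  using refinement_system by (auto simp: refinement_system_def)

lemmas D_id_left = category_id_left[OF category_D] and D_id_right = category_id_right[OF category_D]
  and D_comp = category_comp_hom[OF category_D] and D_assoc = category_assoc[OF category_D]
  and T_comp = category_comp_hom[OF category_T] and T_assoc = category_assoc[OF category_T]
  and tm_hom = functor_hom[OF functor_t] and tm_comp = functor_comp[OF functor_t]

lemma category_Bplus: "category (Bplus D T to tm B)"
  unfolding category_def
  by (auto simp: Bplus_hom_iff Bplus_ob_iff category_id_hom[OF category_D] functor_id[OF functor_t]
      category_id_left[OF category_T] D_id_left D_id_right D_comp tm_comp D_assoc
      intro!: T_assoc[symmetric] tm_hom)

lemma category_Bminus: "category (Bminus D T to tm B)"
  unfolding category_def
  by (auto simp: Bminus_hom_iff Bminus_ob_iff category_id_hom[OF category_D] functor_id[OF functor_t]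
      category_id_right[OF category_T] D_id_left D_id_right D_comp tm_comp D_assoc)
    (metis T_assoc tm_hom)

lemma is_functor_cplus:
  assumes "c \<in> cHom T A B"
  shows "is_functor (Bplus D T to tm A) (Bplus D T to tm B) (cplus T c) id"
  unfolding is_functor_def
  using assms by (auto simp: Bplus_hom_iff Bplus_ob_iff T_comp tm_hom) (metis T_assoc tm_hom)

lemma is_functor_cminus:
  assumes "c \<in> cHom T A B"
  shows "is_functor (Bminus D T to tm B) (Bminus D T to tm A) (cminus T c) id"
  unfolding is_functor_def
  using assms by (auto simp: Bminus_hom_iff Bminus_ob_iff T_comp tm_hom) (metis T_assoc tm_hom)

(* The bracket is balanced: <c+ x | y>_B = <x | c- y>_A. *)
lemma nat_trans_DerR_cplus:
  assumes "c \<in> cHom T A B" "x \<in> cOb (Bplus D T to tm A)"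
  shows "nat_trans (Bminus D T to tm B) F (DerR D T tm (cplus T c x)) \<eta> \<longleftrightarrow>
    nat_trans (Bminus D T to tm B) F (pull (cminus T c) id (DerR D T tm x)) \<eta>"
  using assms by (intro nat_trans_cong) (auto simp: Bplus_ob_iff Bminus_ob_iff T_assoc fun_eq_iff)

lemma nat_trans_DerL_cminus:
  assumes "c \<in> cHom T A B" "y \<in> cOb (Bminus D T to tm B)"
  shows "nat_trans (Bplus D T to tm A) F (DerL D T tm (cminus T c y)) \<eta> \<longleftrightarrow>
    nat_trans (Bplus D T to tm A) F (pull (cplus T c) id (DerL D T tm y)) \<eta>"
  using assms by (intro nat_trans_cong) (auto simp: Bplus_ob_iff Bminus_ob_iff T_assoc fun_eq_iff)

section \<open>Duals\<close>

lemma lperp_value: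
  assumes "\<eta> \<in> fst (lperp D T to tm B \<psi>) x" "y \<in> cOb (Bminus D T to tm B)" "a \<in> fst \<psi> y"
  shows "\<eta> y a \<in> cHom D (fst x) (snd y)" "tm (\<eta> y a) = cCmp T (snd x) (fst y)"
  using nat_trans_value[of _ \<psi> "DerR D T tm x" \<eta>, OF _ assms(2,3)] assms(1) by (simp_all add: lperp_simps)

lemma perp_value:
  assumes "\<eta> \<in> fst (perp D T to tm B \<rho>) y" "x \<in> cOb (Bplus D T to tm B)" "a \<in> fst \<rho> x"
  shows "\<eta> x a \<in> cHom D (fst x) (snd y)" "tm (\<eta> x a) = cCmp T (snd x) (fst y)"
  using nat_trans_value[of _ \<rho> "DerL D T tm y" \<eta>, OF _ assms(2,3)] assms(1) by (simp_all add: perp_simps)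

lemma presheaf_DerR:
  assumes "x \<in> cOb (Bplus D T to tm B)"
  shows "presheaf (Bminus D T to tm B) (DerR D T tm x)"
  unfolding presheaf_def
proof (intro conjI allI ballI impI)
  fix y1 y2 g \<alpha> assume g: "g \<in> cHom (Bminus D T to tm B) y1 y2"
    and \<alpha>: "\<alpha> \<in> fst (DerR D T tm x) y2"
  have gD: "g \<in> cHom D (snd y2) (snd y1)" "cCmp T (fst y2) (tm g) = fst y1"
    and y2: "fst y2 \<in> cHom T B (to (snd y2))" using g by (auto simp: Bminus_hom_iff Bminus_ob_iff)
  have \<alpha>D: "\<alpha> \<in> cHom D (fst x) (snd y2)" "tm \<alpha> = cCmp T (snd x) (fst y2)" using \<alpha> by auto
  have x: "snd x \<in> cHom T (to (fst x)) B" using assms by (simp add: Bplus_ob_iff)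
  show "snd (DerR D T tm x) y1 y2 g \<alpha> \<in> fst (DerR D T tm x) y1"
    using \<alpha>D gD D_comp[OF \<alpha>D(1) gD(1)] T_assoc[OF x y2 tm_hom[OF gD(1)]]
    by (simp add: D_id_left tm_comp)
next
  fix y \<alpha> assume "y \<in> cOb (Bminus D T to tm B)" "\<alpha> \<in> fst (DerR D T tm x) y"
  then show "snd (DerR D T tm x) y y (cId (Bminus D T to tm B) y) \<alpha> = \<alpha>"
    by (metis DerR_simps Bminus_id D_id_left D_id_right derivs_iff)
next
  fix y1 y2 y3 g1 g2 \<alpha> assume "g1 \<in> cHom (Bminus D T to tm B) y1 y2"
    "g2 \<in> cHom (Bminus D T to tm B) y2 y3" "\<alpha> \<in> fst (DerR D T tm x) y3"
  then show "snd (DerR D T tm x) y1 y3 (cCmp (Bminus D T to tm B) g1 g2) \<alpha> =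
      snd (DerR D T tm x) y1 y2 g1 (snd (DerR D T tm x) y2 y3 g2 \<alpha>)"
    by (auto simp: Bminus_hom_iff) (metis D_assoc D_comp D_id_left)
qed

lemma lperp_natural:
  assumes "\<eta> \<in> fst (lperp D T to tm B \<psi>) x" "g \<in> cHom (Bminus D T to tm B) y1 y2" "a \<in> fst \<psi> y2"
  shows "\<eta> y1 (snd \<psi> y1 y2 g a) = cCmp D (\<eta> y2 a) g"
proof -
  have "y2 \<in> cOb (Bminus D T to tm B)" using assms(2) by (simp add: Bminus_hom_iff)
  then show ?thesis
    using nat_trans_natural[of _ \<psi> "DerR D T tm x" \<eta>, OF _ assms(2,3)] assms(1)
      D_id_left[OF lperp_value(1)[OF assms(1) _ assms(3)]] by (simp add: lperp_simps)
qed

lemma perp_natural: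
  assumes "\<eta> \<in> fst (perp D T to tm B \<rho>) y" "k \<in> cHom (Bplus D T to tm B) x1 x2" "a \<in> fst \<rho> x2"
  shows "\<eta> x1 (snd \<rho> x1 x2 k a) = cCmp D k (\<eta> x2 a)"
proof -
  have "x2 \<in> cOb (Bplus D T to tm B)" "k \<in> cHom D (fst x1) (fst x2)"
    using assms(2) by (simp_all add: Bplus_hom_iff)
  then show ?thesis
    using nat_trans_natural[of _ \<rho> "DerL D T tm y" \<eta>, OF _ assms(2,3)] assms(1)
      D_id_right[OF D_comp[OF _ perp_value(1)[OF assms(1) _ assms(3)]]] by (simp add: perp_simps)
qed

lemma lperp_act_closed:
  assumes \<psi>: "presheaf (Bminus D T to tm B) \<psi>" and f: "f \<in> cHom (Bplus D T to tm B) x1 x2"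
    and \<eta>: "\<eta> \<in> fst (lperp D T to tm B \<psi>) x2"
  shows "snd (lperp D T to tm B \<psi>) x1 x2 f \<eta> \<in> fst (lperp D T to tm B \<psi>) x1"
proof -
  have fD: "f \<in> cHom D (fst x1) (fst x2)" "snd x1 = cCmp T (tm f) (snd x2)"
    and x2: "snd x2 \<in> cHom T (to (fst x2)) B" using f by (auto simp: Bplus_hom_iff Bplus_ob_iff)
  show ?thesis
    unfolding lperp_simps mem_Collect_eq
  proof (rule nat_trans_restrictI[OF _ _ category_Bminus \<psi>])
    fix y a assume y: "y \<in> cOb (Bminus D T to tm B)" and a: "a \<in> fst \<psi> y"
    have y': "fst y \<in> cHom T B (to (snd y))" using y by (simp add: Bminus_ob_iff)
    note v = lperp_value[OF \<eta> y a]
    show "cCmp D (cCmp D f (\<eta> y a)) (cId D (snd y)) \<in> fst (DerR D T tm x1) y"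
      using D_comp[OF fD(1) v(1)] v fD T_assoc[OF tm_hom[OF fD(1)] x2 y']
      by (simp add: D_id_right tm_comp[OF fD(1) v(1)])
  next
    fix y1 y2 g a assume g: "g \<in> cHom (Bminus D T to tm B) y1 y2" and a: "a \<in> fst \<psi> y2"
      and y2: "y2 \<in> cOb (Bminus D T to tm B)"
    have gD: "g \<in> cHom D (snd y2) (snd y1)" using g by (simp add: Bminus_hom_iff)
    note v = lperp_value(1)[OF \<eta> y2 a]
    show "cCmp D (cCmp D f (\<eta> y1 (snd \<psi> y1 y2 g a))) (cId D (snd y1)) =
        snd (DerR D T tm x1) y1 y2 g (cCmp D (cCmp D f (\<eta> y2 a)) (cId D (snd y2)))"
      using lperp_natural[OF \<eta> g a] D_assoc[OF fD(1) v gD] D_comp[OF fD(1) D_comp[OF v gD]]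
        D_id_right[OF D_comp[OF fD(1) v]] D_id_left[OF D_comp[OF fD(1) v]]
      by (simp add: D_id_right)
  qed
qed

lemma presheaf_lperp:
  assumes \<psi>: "presheaf (Bminus D T to tm B) \<psi>"
  shows "presheaf (Bplus D T to tm B) (lperp D T to tm B \<psi>)"
  unfolding presheaf_def
proof (intro conjI allI ballI impI)
  fix x1 x2 f \<eta> assume "f \<in> cHom (Bplus D T to tm B) x1 x2" "\<eta> \<in> fst (lperp D T to tm B \<psi>) x2"
  then show "snd (lperp D T to tm B \<psi>) x1 x2 f \<eta> \<in> fst (lperp D T to tm B \<psi>) x1"
    by (rule lperp_act_closed[OF \<psi>])
next
  fix x \<eta> assume "x \<in> cOb (Bplus D T to tm B)" and \<eta>: "\<eta> \<in> fst (lperp D T to tm B \<psi>) x"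
  show "snd (lperp D T to tm B \<psi>) x x (cId (Bplus D T to tm B) x) \<eta> = \<eta>"
  proof -
    have "cCmp D (cCmp D (cId D (fst x)) (\<eta> y a)) (cId D (snd y)) = \<eta> y a"
      if "y \<in> cOb (Bminus D T to tm B)" "a \<in> fst \<psi> y" for y a
      using lperp_value(1)[OF \<eta> that] by (simp add: D_id_left D_id_right)
    then have "(\<lambda>y\<in>cOb (Bminus D T to tm B). \<lambda>a\<in>fst \<psi> y.
          cCmp D (cCmp D (cId D (fst x)) (\<eta> y a)) (cId D (snd y))) =
        (\<lambda>y\<in>cOb (Bminus D T to tm B). \<lambda>a\<in>fst \<psi> y. \<eta> y a)"
      by (auto intro!: restrict_ext)
    with \<eta> show ?thesis
      by (simp add: lperp_simps nat_trans_restrict)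
  qed
next
  fix x1 x2 x3 f g \<eta> assume f: "f \<in> cHom (Bplus D T to tm B) x1 x2"
    and g: "g \<in> cHom (Bplus D T to tm B) x2 x3" and \<eta>: "\<eta> \<in> fst (lperp D T to tm B \<psi>) x3"
  have fD: "f \<in> cHom D (fst x1) (fst x2)" and gD: "g \<in> cHom D (fst x2) (fst x3)"
    using f g by (simp_all add: Bplus_hom_iff)
  show "snd (lperp D T to tm B \<psi>) x1 x3 (cCmp (Bplus D T to tm B) f g) \<eta> =
      snd (lperp D T to tm B \<psi>) x1 x2 f (snd (lperp D T to tm B \<psi>) x2 x3 g \<eta>)"
  proof -
    have "cCmp D (cCmp D (cCmp D f g) (\<eta> y a)) (cId D (snd y)) =
        cCmp D (cCmp D f (cCmp D (cCmp D g (\<eta> y a)) (cId D (snd y)))) (cId D (snd y))"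
      if "y \<in> cOb (Bminus D T to tm B)" "a \<in> fst \<psi> y" for y a
      using lperp_value(1)[OF \<eta> that] by (simp add: D_assoc[OF fD gD] D_id_right[OF D_comp[OF gD]])
    then show ?thesis
      unfolding lperp_simps Bplus_cmp by (auto intro!: restrict_ext)
  qed
qed

lemma perp_act_closed:
  assumes \<rho>: "presheaf (Bplus D T to tm B) \<rho>" and g: "g \<in> cHom (Bminus D T to tm B) y1 y2"
    and \<eta>: "\<eta> \<in> fst (perp D T to tm B \<rho>) y2"
  shows "snd (perp D T to tm B \<rho>) y1 y2 g \<eta> \<in> fst (perp D T to tm B \<rho>) y1"
proof -
  have gD: "g \<in> cHom D (snd y2) (snd y1)" "cCmp T (fst y2) (tm g) = fst y1"
    and y2: "fst y2 \<in> cHom T B (to (snd y2))" using g by (auto simp: Bminus_hom_iff Bminus_ob_iff)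
  show ?thesis
    unfolding perp_simps mem_Collect_eq
  proof (rule nat_trans_restrictI[OF _ _ category_Bplus \<rho>])
    fix x a assume x: "x \<in> cOb (Bplus D T to tm B)" and a: "a \<in> fst \<rho> x"
    have x': "snd x \<in> cHom T (to (fst x)) B" using x by (simp add: Bplus_ob_iff)
    note v = perp_value[OF \<eta> x a]
    show "cCmp D (cCmp D (cId D (fst x)) (\<eta> x a)) g \<in> fst (DerL D T tm y1) x"
      using D_comp[OF v(1) gD(1)] v gD T_assoc[OF x' y2 tm_hom[OF gD(1)]]
      by (simp add: D_id_left[OF v(1)] tm_comp[OF v(1) gD(1)])
  next
    fix x1 x2 k a assume k: "k \<in> cHom (Bplus D T to tm B) x1 x2" and a: "a \<in> fst \<rho> x2"
      and x2: "x2 \<in> cOb (Bplus D T to tm B)"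
    have kD: "k \<in> cHom D (fst x1) (fst x2)" using k by (simp add: Bplus_hom_iff)
    note v = perp_value(1)[OF \<eta> x2 a]
    show "cCmp D (cCmp D (cId D (fst x1)) (\<eta> x1 (snd \<rho> x1 x2 k a))) g =
        snd (DerL D T tm y1) x1 x2 k (cCmp D (cCmp D (cId D (fst x2)) (\<eta> x2 a)) g)"
      using perp_natural[OF \<eta> k a] D_assoc[OF kD v gD(1)] D_comp[OF kD D_comp[OF v gD(1)]]
      by (simp add: D_id_left[OF v] D_id_left[OF D_comp[OF kD v]]
          D_id_right[OF D_comp[OF kD D_comp[OF v gD(1)]]])
  qed
qed

lemma presheaf_perp:
  assumes \<rho>: "presheaf (Bplus D T to tm B) \<rho>"
  shows "presheaf (Bminus D T to tm B) (perp D T to tm B \<rho>)"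
  unfolding presheaf_def
proof (intro conjI allI ballI impI)
  fix y1 y2 g \<eta> assume "g \<in> cHom (Bminus D T to tm B) y1 y2" "\<eta> \<in> fst (perp D T to tm B \<rho>) y2"
  then show "snd (perp D T to tm B \<rho>) y1 y2 g \<eta> \<in> fst (perp D T to tm B \<rho>) y1"
    by (rule perp_act_closed[OF \<rho>])
next
  fix y \<eta> assume "y \<in> cOb (Bminus D T to tm B)" and \<eta>: "\<eta> \<in> fst (perp D T to tm B \<rho>) y"
  show "snd (perp D T to tm B \<rho>) y y (cId (Bminus D T to tm B) y) \<eta> = \<eta>"
  proof -
    have "cCmp D (cCmp D (cId D (fst x)) (\<eta> x a)) (cId D (snd y)) = \<eta> x a"
      if "x \<in> cOb (Bplus D T to tm B)" "a \<in> fst \<rho> x" for x a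
      using perp_value(1)[OF \<eta> that] by (simp add: D_id_left D_id_right)
    then have "(\<lambda>x\<in>cOb (Bplus D T to tm B). \<lambda>a\<in>fst \<rho> x.
          cCmp D (cCmp D (cId D (fst x)) (\<eta> x a)) (cId D (snd y))) =
        (\<lambda>x\<in>cOb (Bplus D T to tm B). \<lambda>a\<in>fst \<rho> x. \<eta> x a)"
      by (auto intro!: restrict_ext)
    with \<eta> show ?thesis
      by (simp add: perp_simps nat_trans_restrict)
  qed
next
  fix y1 y2 y3 g1 g2 \<eta> assume g1: "g1 \<in> cHom (Bminus D T to tm B) y1 y2"
    and g2: "g2 \<in> cHom (Bminus D T to tm B) y2 y3" and \<eta>: "\<eta> \<in> fst (perp D T to tm B \<rho>) y3"
  have gD: "g1 \<in> cHom D (snd y2) (snd y1)" "g2 \<in> cHom D (snd y3) (snd y2)"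
    using g1 g2 by (simp_all add: Bminus_hom_iff)
  show "snd (perp D T to tm B \<rho>) y1 y3 (cCmp (Bminus D T to tm B) g1 g2) \<eta> =
      snd (perp D T to tm B \<rho>) y1 y2 g1 (snd (perp D T to tm B \<rho>) y2 y3 g2 \<eta>)"
  proof -
    have "cCmp D (cCmp D (cId D (fst x)) (\<eta> x a)) (cCmp D g2 g1) =
        cCmp D (cCmp D (cId D (fst x)) (cCmp D (cCmp D (cId D (fst x)) (\<eta> x a)) g2)) g1"
      if "x \<in> cOb (Bplus D T to tm B)" "a \<in> fst \<rho> x" for x a
      using perp_value(1)[OF \<eta> that]
      by (simp add: D_id_left D_assoc[OF _ gD(2,1)] D_id_left[OF D_comp[OF _ gD(2)]])
    then show ?thesis
      unfolding perp_simps Bminus_cmp by (auto intro!: restrict_ext)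
  qed
qed

section \<open>Change of base along c\<close>

lemma psh_iso_lperp_lan:
  assumes c: "c \<in> cHom T A B" and \<psi>: "presheaf (Bminus D T to tm B) \<psi>"
  shows "psh_iso (Bplus D T to tm A)
           (pull (cplus T c) id (lperp D T to tm B \<psi>))
           (lperp D T to tm A (lan (Bminus D T to tm B) (Bminus D T to tm A) (cminus T c) id \<psi>))"
proof -
  let ?BM = "Bminus D T to tm B" and ?AM = "Bminus D T to tm A" and ?AP = "Bplus D T to tm A"
  let ?F = "pull (cplus T c) id (lperp D T to tm B \<psi>)"
  let ?G = "lperp D T to tm A (lan ?BM ?AM (cminus T c) id \<psi>)"
  interpret lan_data ?BM ?AM "cminus T c" id \<psi>
    using category_Bminus is_functor_cminus[OF c] \<psi> by unfold_locales
  define \<Phi> where "\<Phi> = (\<lambda>x\<in>cOb ?AP. \<lambda>\<eta>\<in>fst ?G x. lan_restrict ?BM ?AM (cminus T c) id \<psi> \<eta>)"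
  have presheaf_G: "presheaf ?AP ?G"
    by (rule presheaf_lperp[OF presheaf_lan])
  have bij: "bij_betw (\<Phi> x) (fst ?G x) (fst ?F x)" if x: "x \<in> cOb ?AP" for x
  proof -
    have "fst ?F x = {\<theta>. nat_trans ?BM \<psi> (pull (cminus T c) id (DerR D T tm x)) \<theta>}"
      by (simp add: lperp_simps nat_trans_DerR_cplus[OF c x])
    then show ?thesis
      unfolding \<Phi>_def restrict_apply'[OF x] bij_betw_restrict_eq
      using bij_betw_lan_restrict[OF presheaf_DerR[OF x]] by (simp add: lperp_simps)
  qed
  have "nat_trans ?AP ?G ?F \<Phi>"
    unfolding \<Phi>_def
  proof (rule nat_trans_restrictI[OF _ _ category_Bplus presheaf_G])
    fix x \<eta> assume x: "x \<in> cOb ?AP" and \<eta>: "\<eta> \<in> fst ?G x"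
    show "lan_restrict ?BM ?AM (cminus T c) id \<psi> \<eta> \<in> fst ?F x"
      using bij_betw_apply[OF bij[OF x] \<eta>] x \<eta> by (simp add: \<Phi>_def)
  next
    fix x1 x2 k \<eta>
    have "lan_restrict ?BM ?AM (cminus T c) id \<psi> (snd ?G x1 x2 k \<eta>) y a =
        snd ?F x1 x2 k (lan_restrict ?BM ?AM (cminus T c) id \<psi> \<eta>) y a" for y a
      using functor_ob[OF is_functor_cminus[OF c]] category_id_hom[OF category_Bminus]
      by (auto simp: lan_restrict_def lperp_simps lan_cls_mem simp del: Bminus_id)
    then show "lan_restrict ?BM ?AM (cminus T c) id \<psi> (snd ?G x1 x2 k \<eta>) =
        snd ?F x1 x2 k (lan_restrict ?BM ?AM (cminus T c) id \<psi> \<eta>)"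
      by (simp add: fun_eq_iff)
  qed
  then show ?thesis
    by (rule psh_iso_inverse[OF category_Bplus presheaf_G _ bij])
qed

lemma nat_trans_lan_perp:
  assumes c: "c \<in> cHom T A B" and \<rho>: "presheaf (Bplus D T to tm B) \<rho>"
  shows "\<exists>\<eta>. nat_trans (Bminus D T to tm A)
           (lan (Bminus D T to tm B) (Bminus D T to tm A) (cminus T c) id (perp D T to tm B \<rho>))
           (perp D T to tm A (pull (cplus T c) id \<rho>)) \<eta>"
proof -
  let ?BM = "Bminus D T to tm B" and ?AM = "Bminus D T to tm A" and ?AP = "Bplus D T to tm A"
  let ?G = "perp D T to tm A (pull (cplus T c) id \<rho>)"
  interpret lan_data ?BM ?AM "cminus T c" id "perp D T to tm B \<rho>"
    using category_Bminus is_functor_cminus[OF c] presheaf_perp[OF \<rho>] by unfold_locales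
  define \<theta> where "\<theta> = (\<lambda>y\<in>cOb ?BM. \<lambda>\<zeta>\<in>fst (perp D T to tm B \<rho>) y. \<lambda>x\<in>cOb ?AP. \<zeta> (cplus T c x))"
  have "nat_trans ?BM (perp D T to tm B \<rho>) (pull (cminus T c) id ?G) \<theta>"
    unfolding \<theta>_def
  proof (rule nat_trans_restrictI[OF _ _ category_Bminus presheaf_perp[OF \<rho>]])
    fix y \<zeta> assume y: "y \<in> cOb ?BM" and "\<zeta> \<in> fst (perp D T to tm B \<rho>) y"
    then show "(\<lambda>x\<in>cOb ?AP. \<zeta> (cplus T c x)) \<in> fst (pull (cminus T c) id ?G) y"
      using nat_trans_pull[OF category_Bplus is_functor_cplus[OF c], of \<rho> "DerL D T tm y" \<zeta>]
      by (simp add: perp_simps nat_trans_DerL_cminus[OF c y])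
  next
    fix y1 y2 g \<zeta> assume "g \<in> cHom ?BM y1 y2"
    show "(\<lambda>x\<in>cOb ?AP. snd (perp D T to tm B \<rho>) y1 y2 g \<zeta> (cplus T c x)) =
        snd (pull (cminus T c) id ?G) y1 y2 g (\<lambda>x\<in>cOb ?AP. \<zeta> (cplus T c x))"
      using functor_ob[OF is_functor_cplus[OF c]] by (auto simp: perp_simps intro!: restrict_ext)
  qed
  then show ?thesis
    using nat_trans_lan_transpose[OF presheaf_perp[OF presheaf_pull[OF is_functor_cplus[OF c] \<rho>]]]
    by blast
qed

lemma nat_trans_lan_lperp:
  assumes c: "c \<in> cHom T A B" and \<sigma>: "presheaf (Bminus D T to tm A) \<sigma>"
  shows "\<exists>\<eta>. nat_trans (Bplus D T to tm B)
           (lan (Bplus D T to tm A) (Bplus D T to tm B) (cplus T c) id (lperp D T to tm A \<sigma>))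
           (lperp D T to tm B (pull (cminus T c) id \<sigma>)) \<eta>"
proof -
  let ?AP = "Bplus D T to tm A" and ?BP = "Bplus D T to tm B" and ?BM = "Bminus D T to tm B"
  let ?G = "lperp D T to tm B (pull (cminus T c) id \<sigma>)"
  interpret lan_data ?AP ?BP "cplus T c" id "lperp D T to tm A \<sigma>"
    using category_Bplus is_functor_cplus[OF c] presheaf_lperp[OF \<sigma>] by unfold_locales
  define \<theta> where "\<theta> = (\<lambda>x\<in>cOb ?AP. \<lambda>\<zeta>\<in>fst (lperp D T to tm A \<sigma>) x. \<lambda>y\<in>cOb ?BM. \<zeta> (cminus T c y))"
  have "nat_trans ?AP (lperp D T to tm A \<sigma>) (pull (cplus T c) id ?G) \<theta>"
    unfolding \<theta>_def
  proof (rule nat_trans_restrictI[OF _ _ category_Bplus presheaf_lperp[OF \<sigma>]])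
    fix x \<zeta> assume x: "x \<in> cOb ?AP" and "\<zeta> \<in> fst (lperp D T to tm A \<sigma>) x"
    then show "(\<lambda>y\<in>cOb ?BM. \<zeta> (cminus T c y)) \<in> fst (pull (cplus T c) id ?G) x"
      using nat_trans_pull[OF category_Bminus is_functor_cminus[OF c], of \<sigma> "DerR D T tm x" \<zeta>]
      by (simp add: lperp_simps nat_trans_DerR_cplus[OF c x])
  next
    fix x1 x2 k \<zeta> assume "k \<in> cHom ?AP x1 x2"
    show "(\<lambda>y\<in>cOb ?BM. snd (lperp D T to tm A \<sigma>) x1 x2 k \<zeta> (cminus T c y)) =
        snd (pull (cplus T c) id ?G) x1 x2 k (\<lambda>y\<in>cOb ?BM. \<zeta> (cminus T c y))"
      using functor_ob[OF is_functor_cminus[OF c]] by (auto simp: lperp_simps intro!: restrict_ext)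
  qed
  then show ?thesis
    using nat_trans_lan_transpose[OF presheaf_lperp[OF presheaf_pull[OF is_functor_cminus[OF c] \<sigma>]]]
    by blast
qed

end

theorem corollary4p12:
  fixes D :: "('p,'d) cat" and T :: "('a,'c) cat"
    and to :: "'p \<Rightarrow> 'a" and tm :: "'d \<Rightarrow> 'c"
    and A B :: 'a and c :: 'c
    and \<psi> :: "('c \<times> 'p, 'd, 'v) psh"
    and \<rho> :: "('p \<times> 'c, 'd, 'w) psh"
    and \<sigma> :: "('c \<times> 'p, 'd, 'u) psh"
  assumes "refinement_system D T to tm"
    and "c \<in> cHom T A B"
    and "presheaf (Bminus D T to tm B) \<psi>"
    and "presheaf (Bplus D T to tm B) \<rho>"
    and "presheaf (Bminus D T to tm A) \<sigma>"
  shows "psh_iso (Bplus D T to tm A)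
           (pull (cplus T c) id (lperp D T to tm B \<psi>))
           (lperp D T to tm A (lan (Bminus D T to tm B) (Bminus D T to tm A) (cminus T c) id \<psi>))
    \<and> (\<exists>\<eta>. nat_trans (Bminus D T to tm A)
           (lan (Bminus D T to tm B) (Bminus D T to tm A) (cminus T c) id (perp D T to tm B \<rho>))
           (perp D T to tm A (pull (cplus T c) id \<rho>)) \<eta>)
    \<and> (\<exists>\<eta>. nat_trans (Bplus D T to tm B)
           (lan (Bplus D T to tm A) (Bplus D T to tm B) (cplus T c) id (lperp D T to tm A \<sigma>))
           (lperp D T to tm B (pull (cminus T c) id \<sigma>)) \<eta>)"
proof -
  interpret refinement_setting D T to tm
    by unfold_locales (rule assms(1))
  show ?thesis
    using psh_iso_lperp_lan[OF assms(2,3)] nat_trans_lan_perp[OF assms(2,4)]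
      nat_trans_lan_lperp[OF assms(2,5)] by blast
qed

end
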